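(* Let $\mathcal{U}$ be a UEC-representative. Then the partially directed graph $\mathtt{init\_CPDAG}(\mathcal{U})$ is a CPDAG, i.e. it equals the CPDAG of the Markov equivalence class of some DAG.
   Context: For a DAG $\mathcal{D}$, a trek is a path with no repeated vertices and no collider; the unconditional dependence graph $\mathcal{U}^\mathcal{D}$ has an edge between distinct $v,w$ iff there is a trek between them; a UEC-representative is an undirected graph equal to $\mathcal{U}^\mathcal{D}$ for some DAG on the same vertex set. $\mathtt{init\_CPDAG}(\mathcal{U})$ is the partially directed graph obtained from $\mathcal{U}$ as follows: for every induced path $v - v' - v''$ in $\mathcal{U}$ ($v,v''$ nonadjacent) orient its edges as $v\to v'\leftarrow v''$; thus an edge $\{a,b\}$ receives orientation $a\to b$ iff some neighbor of $b$ other than $a$ is nonadjacent to $a$. Edges receiving both orientations (bidirected) are removed; edges receiving exactly one orientation become directed accordingly; edges receiving none stay undirected. The CPDAG of a DAG $\mathcal{D}$ is the partially directed graph with the skeleton of $\mathcal{D}$ in which $i\to j$ is directed iff $i\to j$ is an edge of every DAG Markov equivalent to $\mathcal{D}$, all other edges being undirected (Markov equivalent: same skeleton and v-structures). *)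

theory Defs
  imports Main
begin

definition is_dag :: "'a set \<Rightarrow> ('a \<times> 'a) set \<Rightarrow> bool" where
  "is_dag V D \<longleftrightarrow> finite V \<and> D \<subseteq> V \<times> V \<and> acyclic D"

definition is_path :: "('a \<times> 'a) set \<Rightarrow> 'a list \<Rightarrow> bool" where
  "is_path D xs \<longleftrightarrow> xs \<noteq> [] \<and> distinct xs \<and>
     (\<forall>i. Suc i < length xs \<longrightarrow> (xs!i, xs!Suc i) \<in> D \<or> (xs!Suc i, xs!i) \<in> D)"

definition no_collider :: "('a \<times> 'a) set \<Rightarrow> 'a list \<Rightarrow> bool" where
  "no_collider D xs \<longleftrightarrow>
     (\<forall>i. Suc i < length xs \<longrightarrow> 0 < i \<longrightarrow>
        \<not> ((xs!(i - 1), xs!i) \<in> D \<and> (xs!Suc i, xs!i) \<in> D))"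

definition is_trek :: "('a \<times> 'a) set \<Rightarrow> 'a list \<Rightarrow> bool" where
  "is_trek D xs \<longleftrightarrow> is_path D xs \<and> no_collider D xs"

definition trek_between :: "('a \<times> 'a) set \<Rightarrow> 'a \<Rightarrow> 'a \<Rightarrow> bool" where
  "trek_between D v w \<longleftrightarrow> (\<exists>xs. is_trek D xs \<and> hd xs = v \<and> last xs = w)"

definition udg :: "'a set \<Rightarrow> ('a \<times> 'a) set \<Rightarrow> ('a \<times> 'a) set" where
  "udg V D = {(v, w). v \<in> V \<and> w \<in> V \<and> v \<noteq> w \<and> trek_between D v w}"

definition UEC_representative :: "'a set \<Rightarrow> ('a \<times> 'a) set \<Rightarrow> bool" where
  "UEC_representative V U \<longleftrightarrow> (\<exists>D. is_dag V D \<and> U = udg V D)"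

(* A partially directed graph: (directed edges, undirected edges stored symmetrically). *)
type_synonym 'a pdg = "('a \<times> 'a) set \<times> ('a \<times> 'a) set"

definition orient :: "('a \<times> 'a) set \<Rightarrow> 'a \<Rightarrow> 'a \<Rightarrow> bool" where
  "orient U a b \<longleftrightarrow> (a, b) \<in> U \<and> (\<exists>c. (c, b) \<in> U \<and> c \<noteq> a \<and> (a, c) \<notin> U)"

definition init_CPDAG :: "('a \<times> 'a) set \<Rightarrow> 'a pdg" where
  "init_CPDAG U =
     ({(a, b). orient U a b \<and> \<not> orient U b a},
      {(a, b). (a, b) \<in> U \<and> \<not> orient U a b \<and> \<not> orient U b a})"

definition skeleton :: "('a \<times> 'a) set \<Rightarrow> ('a \<times> 'a) set" where
  "skeleton D = D \<union> D\<inverse>"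

definition v_structures :: "('a \<times> 'a) set \<Rightarrow> ('a \<times> 'a \<times> 'a) set" where
  "v_structures D = {(a, c, b). (a, c) \<in> D \<and> (b, c) \<in> D \<and> a \<noteq> b \<and> (a, b) \<notin> skeleton D}"

definition markov_equiv :: "('a \<times> 'a) set \<Rightarrow> ('a \<times> 'a) set \<Rightarrow> bool" where
  "markov_equiv D D' \<longleftrightarrow> skeleton D = skeleton D' \<and> v_structures D = v_structures D'"

definition cpdag_dir :: "'a set \<Rightarrow> ('a \<times> 'a) set \<Rightarrow> ('a \<times> 'a) set" where
  "cpdag_dir V D = {(i, j). (i, j) \<in> D \<and> (\<forall>D'. is_dag V D' \<and> markov_equiv D D' \<longrightarrow> (i, j) \<in> D')}"

definition cpdag :: "'a set \<Rightarrow> ('a \<times> 'a) set \<Rightarrow> 'a pdg" where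
  "cpdag V D =
     (cpdag_dir V D,
      {(i, j). (i, j) \<in> skeleton D \<and> (i, j) \<notin> cpdag_dir V D \<and> (j, i) \<notin> cpdag_dir V D})"

end

theory Submission
  imports Defs
begin

text \<open>
  For a DAG \<open>D\<close> let \<open>S x\<close> be the set of sources (parentless vertices) among the ancestors of
  \<open>x\<close>. Two vertices are joined by a trek iff they have a common ancestor, iff \<open>S u \<inter> S v \<noteq> {}\<close>;
  so \<open>U\<close> is the intersection graph of the sets \<open>S x\<close>, and \<open>S s = {s}\<close> for every source \<open>s\<close>.
  In these terms an edge \<open>a - b\<close> receives the orientation \<open>a \<rightarrow> b\<close> iff \<open>\<not> S b \<subseteq> S a\<close>, so
  \<open>init_CPDAG U\<close> directs it as \<open>a \<rightarrow> b\<close> if \<open>S a \<subset> S b\<close>, keeps it undirected if \<open>S a = S b\<close>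
  and deletes it if the two sets are incomparable.

  The witness DAG keeps the edges with comparable source sets, directed towards the larger one,
  with ties broken by an injective numbering \<open>g\<close> of the vertices. Its v-structures do not depend
  on \<open>g\<close>; reversing \<open>g\<close> reverses every edge with \<open>S a = S b\<close>, while an edge \<open>a \<rightarrow> b\<close> with
  \<open>S a \<subset> S b\<close> lies in the v-structure \<open>a \<rightarrow> b \<leftarrow> s\<close> for any \<open>s \<in> S b - S a\<close>. Hence its CPDAG
  is \<open>init_CPDAG U\<close>.
\<close>

lemma is_trek_tl:
  assumes "is_trek D (x # xs)" "xs \<noteq> []"
  shows "is_trek D xs"
  unfolding is_trek_def is_path_def no_collider_def
proof (intro conjI allI impI)
  show "xs \<noteq> []" "distinct xs" using assms unfolding is_trek_def is_path_def by auto
next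
  fix i assume "Suc i < length xs"
  then show "(xs!i, xs!Suc i) \<in> D \<or> (xs!Suc i, xs!i) \<in> D"
    using assms(1) unfolding is_trek_def is_path_def by (auto dest!: spec[of _ "Suc i"])
next
  fix i assume "Suc i < length xs" "0 < i"
  then show "\<not> ((xs!(i - 1), xs!i) \<in> D \<and> (xs!Suc i, xs!i) \<in> D)"
    using assms(1) unfolding is_trek_def no_collider_def
    by (cases i) (auto dest!: spec[of _ "Suc i"])
qed

text \<open>The information about the first edge makes the induction go through: a trek whose first
  edge points away from its start cannot turn back without creating a collider.\<close>

lemma trek_directed_or_common_ancestor:
  assumes "is_trek D xs"
  shows "(hd xs, last xs) \<in> D\<^sup>* \<or>
    (Suc 0 < length xs \<and> (xs!1, hd xs) \<in> D \<and> (\<exists>z. (z, hd xs) \<in> D\<^sup>* \<and> (z, last xs) \<in> D\<^sup>*))"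
  using assms
proof (induction xs)
  case Nil
  then show ?case by (simp add: is_trek_def is_path_def)
next
  case (Cons x xs)
  show ?case
  proof (cases "xs = []")
    case True
    then show ?thesis by simp
  next
    case False
    have IH: "(hd xs, last xs) \<in> D\<^sup>* \<or>
        (Suc 0 < length xs \<and> (xs!1, hd xs) \<in> D \<and> (\<exists>z. (z, hd xs) \<in> D\<^sup>* \<and> (z, last xs) \<in> D\<^sup>*))"
      using Cons.IH is_trek_tl[OF Cons.prems False] .
    have second: "(x # xs)!1 = hd xs" and last: "last (x # xs) = last xs"
      using False by (simp_all add: hd_conv_nth)
    have "(x, hd xs) \<in> D \<or> (hd xs, x) \<in> D"
      using Cons.prems False unfolding is_trek_def is_path_def by (auto dest!: spec[of _ 0] simp: hd_conv_nth)
    then consider (backward) "(hd xs, x) \<in> D" | (forward) "(x, hd xs) \<in> D" "(hd xs, x) \<notin> D"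
      by blast
    then show ?thesis
    proof cases
      case backward
      then have "\<exists>z. (z, x) \<in> D\<^sup>* \<and> (z, last xs) \<in> D\<^sup>*"
        using IH by (meson converse_rtrancl_into_rtrancl r_into_rtrancl rtrancl_trans)
      then show ?thesis using backward False second last by simp
    next
      case forward
      have "(hd xs, last xs) \<in> D\<^sup>*"
      proof (rule ccontr)
        assume "(hd xs, last xs) \<notin> D\<^sup>*"
        then have "Suc 0 < length xs" "(xs!1, xs!0) \<in> D"
          using IH False by (auto simp: hd_conv_nth)
        then show False
          using Cons.prems forward False unfolding is_trek_def no_collider_def
          by (auto dest!: spec[of _ 1] simp: hd_conv_nth)
      qed
      then show ?thesis using forward last by (simp add: converse_rtrancl_into_rtrancl)
    qed
  qed
qed

lemma trek_between_imp_common_ancestor: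
  "trek_between D u v \<Longrightarrow> \<exists>z. (z, u) \<in> D\<^sup>* \<and> (z, v) \<in> D\<^sup>*"
  unfolding trek_between_def using trek_directed_or_common_ancestor by blast

lemma is_trek_take:
  assumes "is_trek D xs" "k < length xs"
  shows "is_trek D (take (Suc k) xs)"
  using assms unfolding is_trek_def is_path_def no_collider_def by auto

lemma is_trek_snoc:
  assumes "is_trek D xs" "(last xs, v) \<in> D" "(v, last xs) \<notin> D" "v \<notin> set xs"
  shows "is_trek D (xs @ [v])"
proof -
  have ne: "xs \<noteq> []" using assms(1) unfolding is_trek_def is_path_def by simp
  have l: "last xs = xs ! (length xs - 1)" using ne by (simp add: last_conv_nth)
  show ?thesis
    unfolding is_trek_def is_path_def no_collider_def
  proof (intro conjI allI impI)
    show "xs @ [v] \<noteq> []" by simp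
    show "distinct (xs @ [v])" using assms(1,4) unfolding is_trek_def is_path_def by simp
  next
    fix i assume i: "Suc i < length (xs @ [v])"
    show "((xs @ [v]) ! i, (xs @ [v]) ! Suc i) \<in> D \<or> ((xs @ [v]) ! Suc i, (xs @ [v]) ! i) \<in> D"
    proof (cases "Suc i < length xs")
      case True then show ?thesis using assms(1) unfolding is_trek_def is_path_def by (auto simp: nth_append)
    next
      case False
      then have "i = length xs - 1" using i by simp
      then show ?thesis using assms(2) l ne False by (auto simp: nth_append)
    qed
  next
    fix i assume i: "Suc i < length (xs @ [v])" "0 < i"
    show "\<not> (((xs @ [v]) ! (i - 1), (xs @ [v]) ! i) \<in> D \<and> ((xs @ [v]) ! Suc i, (xs @ [v]) ! i) \<in> D)"
    proof (cases "Suc i < length xs")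
      case True then show ?thesis using assms(1) i unfolding is_trek_def no_collider_def by (auto simp: nth_append)
    next
      case False
      then have "i = length xs - 1" using i by simp
      then show ?thesis using assms(3) l ne False i by (auto simp: nth_append)
    qed
  qed
qed

lemma is_trek_rev:
  assumes "is_trek D xs"
  shows "is_trek D (rev xs)"
proof -
  let ?n = "length xs"
  show ?thesis
    unfolding is_trek_def is_path_def no_collider_def
  proof (intro conjI allI impI)
    show "rev xs \<noteq> []" "distinct (rev xs)" using assms unfolding is_trek_def is_path_def by auto
  next
    fix i assume i: "Suc i < length (rev xs)"
    define j where "j = ?n - Suc (Suc i)"
    have "Suc j < ?n" using i j_def by simp
    then have "(xs!j, xs!Suc j) \<in> D \<or> (xs!Suc j, xs!j) \<in> D" using assms unfolding is_trek_def is_path_def by blast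
    moreover have "rev xs ! i = xs ! Suc j" "rev xs ! Suc i = xs ! j" using i j_def by (auto simp: rev_nth Suc_diff_Suc)
    ultimately show "(rev xs ! i, rev xs ! Suc i) \<in> D \<or> (rev xs ! Suc i, rev xs ! i) \<in> D" by auto
  next
    fix i assume i: "Suc i < length (rev xs)" "0 < i"
    define j where "j = ?n - Suc i"
    have "Suc j < ?n" "0 < j" using i j_def by auto
    then have "\<not> ((xs!(j-1), xs!j) \<in> D \<and> (xs!Suc j, xs!j) \<in> D)" using assms unfolding is_trek_def no_collider_def by blast
    moreover have "rev xs ! i = xs ! j" "rev xs ! Suc i = xs ! (j - 1)" "rev xs ! (i - 1) = xs ! Suc j"
      using i j_def by (auto simp: rev_nth Suc_diff_Suc)
    ultimately show "\<not> ((rev xs ! (i - 1), rev xs ! i) \<in> D \<and> (rev xs ! Suc i, rev xs ! i) \<in> D)" by auto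
  qed
qed

lemma trek_between_snoc:
  assumes ac: "acyclic D" and t: "trek_between D u y" and e: "(y, v) \<in> D"
  shows "trek_between D u v"
proof -
  obtain xs where xs: "is_trek D xs" "hd xs = u" "last xs = y" using t unfolding trek_between_def by blast
  have ne: "xs \<noteq> []" using xs unfolding is_trek_def is_path_def by simp
  show ?thesis
  proof (cases "v \<in> set xs")
    case True
    then obtain k where k: "k < length xs" "xs ! k = v" by (auto simp: in_set_conv_nth)
    have "is_trek D (take (Suc k) xs)" using is_trek_take[OF xs(1) k(1)] .
    moreover have "hd (take (Suc k) xs) = u" using xs(2) ne by simp
    moreover have "last (take (Suc k) xs) = v" using k by (simp add: take_Suc_conv_app_nth)
    ultimately show ?thesis unfolding trek_between_def by blast
  next
    case False
    have "(v, y) \<notin> D"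
    proof
      assume "(v, y) \<in> D"
      with e have "(y, y) \<in> D\<^sup>+" by auto
      then show False using ac unfolding acyclic_def by blast
    qed
    then have "is_trek D (xs @ [v])" using is_trek_snoc[OF xs(1)] xs(3) e False by simp
    moreover have "hd (xs @ [v]) = u" using xs(2) ne by simp
    ultimately show ?thesis unfolding trek_between_def by fastforce
  qed
qed

lemma trek_between_refl: "trek_between D u u"
  unfolding trek_between_def is_trek_def is_path_def no_collider_def
  by (rule exI[of _ "[u]"]) simp

lemma trek_between_sym: "trek_between D u v \<Longrightarrow> trek_between D v u"
  unfolding trek_between_def using is_trek_rev
  by (metis hd_rev is_path_def is_trek_def last_rev)

lemma trek_between_rtrancl:
  assumes "acyclic D" "trek_between D u y" "(y, v) \<in> D\<^sup>*"
  shows "trek_between D u v"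
  using assms(3,2) by induction (auto intro: trek_between_snoc[OF assms(1)])

lemma common_ancestor_imp_trek_between:
  assumes "acyclic D" "(z, u) \<in> D\<^sup>*" "(z, v) \<in> D\<^sup>*"
  shows "trek_between D u v"
proof -
  have "trek_between D z u"
    using trek_between_rtrancl[OF assms(1) trek_between_refl assms(2)] .
  then have "trek_between D u z" by (rule trek_between_sym)
  then show ?thesis using trek_between_rtrancl[OF assms(1) _ assms(3)] by blast
qed

definition source_ancestors :: "('a \<times> 'a) set \<Rightarrow> 'a \<Rightarrow> 'a set" where
  "source_ancestors D x = {s. (\<forall>y. (y, s) \<notin> D) \<and> (s, x) \<in> D\<^sup>*}"

lemma is_dag_imp_wf: "is_dag V D \<Longrightarrow> wf D"
proof -
  assume "is_dag V D"
  then have "finite D" "acyclic D"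
    using finite_subset[of D "V \<times> V"] unfolding is_dag_def by auto
  then show "wf D" by (rule finite_acyclic_wf)
qed

lemma source_ancestor_below:
  assumes "wf D" "(z, x) \<in> D\<^sup>*"
  shows "\<exists>s \<in> source_ancestors D x. (s, z) \<in> D\<^sup>*"
proof -
  have "z \<in> {y. (y, z) \<in> D\<^sup>*}" by simp
  then obtain m where m: "m \<in> {y. (y, z) \<in> D\<^sup>*}"
    and minimal: "\<And>y. (y, m) \<in> D \<Longrightarrow> y \<notin> {y. (y, z) \<in> D\<^sup>*}"
    using wfE_min[OF assms(1)] by metis
  have "(y, m) \<notin> D" for y
  proof
    assume "(y, m) \<in> D"
    moreover from this have "(y, z) \<in> D\<^sup>*"
      using m by (simp add: converse_rtrancl_into_rtrancl)
    ultimately show False using minimal by blast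
  qed
  moreover have "(m, x) \<in> D\<^sup>*"
    using m assms(2) by simp
  ultimately show ?thesis
    using m unfolding source_ancestors_def by auto
qed

lemma source_ancestors_of_source: "s \<in> source_ancestors D x \<Longrightarrow> source_ancestors D s = {s}"
  unfolding source_ancestors_def by (auto elim: rtranclE)

lemma source_ancestors_subset:
  assumes "D \<subseteq> V \<times> V" "x \<in> V"
  shows "source_ancestors D x \<subseteq> V"
proof
  fix s assume "s \<in> source_ancestors D x"
  then have "(s, x) \<in> D\<^sup>*" unfolding source_ancestors_def by simp
  then show "s \<in> V" using assms by (cases rule: converse_rtranclE) auto
qed

lemma trek_between_iff_common_source:
  assumes "is_dag V D"
  shows "trek_between D u v \<longleftrightarrow> source_ancestors D u \<inter> source_ancestors D v \<noteq> {}"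
proof
  assume "trek_between D u v"
  then have "\<exists>z. (z, u) \<in> D\<^sup>* \<and> (z, v) \<in> D\<^sup>*"
    by (rule trek_between_imp_common_ancestor)
  then obtain z where z: "(z, u) \<in> D\<^sup>*" "(z, v) \<in> D\<^sup>*"
    by blast
  obtain s where s: "s \<in> source_ancestors D u" "(s, z) \<in> D\<^sup>*"
    using source_ancestor_below[OF is_dag_imp_wf[OF assms] z(1)] by blast
  have "(s, v) \<in> D\<^sup>*"
    using s(2) z(2) by (rule rtrancl_trans)
  then have "s \<in> source_ancestors D v"
    using s(1) unfolding source_ancestors_def by simp
  then show "source_ancestors D u \<inter> source_ancestors D v \<noteq> {}"
    using s(1) by blast
next
  assume "source_ancestors D u \<inter> source_ancestors D v \<noteq> {}"
  then obtain s where s: "(s, u) \<in> D\<^sup>*" "(s, v) \<in> D\<^sup>*"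
    unfolding source_ancestors_def by blast
  have "acyclic D"
    using assms unfolding is_dag_def by simp
  then show "trek_between D u v"
    using s by (rule common_ancestor_imp_trek_between)
qed

locale source_structure =
  fixes V :: "'a set" and S :: "'a \<Rightarrow> 'a set" and U :: "('a \<times> 'a) set"
  assumes finite_V: "finite V"
    and adjacent_iff: "(a, b) \<in> U \<longleftrightarrow> a \<in> V \<and> b \<in> V \<and> a \<noteq> b \<and> S a \<inter> S b \<noteq> {}"
    and S_nonempty: "x \<in> V \<Longrightarrow> S x \<noteq> {}"
    and S_subset: "x \<in> V \<Longrightarrow> S x \<subseteq> V"
    and S_source: "x \<in> V \<Longrightarrow> s \<in> S x \<Longrightarrow> S s = {s}"
begin

lemma adjacent_sym: "(a, b) \<in> U \<Longrightarrow> (b, a) \<in> U"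
  using adjacent_iff by blast

lemma source_outside_adjacent:
  assumes "(a, b) \<in> U" "s \<in> S b" "s \<notin> S a"
  shows "s \<noteq> a" "(s, b) \<in> U" "(a, s) \<notin> U" "S s \<subset> S b"
proof -
  have V: "a \<in> V" "b \<in> V" and common: "S a \<inter> S b \<noteq> {}"
    using assms(1) adjacent_iff by auto
  have Ss: "S s = {s}" and sV: "s \<in> V"
    using S_source[OF V(2) assms(2)] S_subset[OF V(2)] assms(2) by auto
  have "S b \<noteq> {s}"
    using common assms(3) by auto
  then show "S s \<subset> S b"
    using Ss assms(2) by auto
  then have "s \<noteq> b" by auto
  then show "(s, b) \<in> U"
    using adjacent_iff sV V Ss assms(2) by auto
  show "s \<noteq> a" "(a, s) \<notin> U"
    using adjacent_iff Ss assms(3) by auto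
qed

lemma orient_iff: "orient U a b \<longleftrightarrow> (a, b) \<in> U \<and> \<not> S b \<subseteq> S a"
proof
  assume "orient U a b"
  then obtain c where c: "(a, b) \<in> U" "(c, b) \<in> U" "c \<noteq> a" "(a, c) \<notin> U"
    unfolding orient_def by blast
  have "\<not> S b \<subseteq> S a"
  proof
    assume "S b \<subseteq> S a"
    then have "(a, c) \<in> U"
      using c(1-3) adjacent_iff by auto
    then show False using c(4) by simp
  qed
  then show "(a, b) \<in> U \<and> \<not> S b \<subseteq> S a" using c(1) by simp
next
  assume ab: "(a, b) \<in> U \<and> \<not> S b \<subseteq> S a"
  then obtain s where "s \<in> S b" "s \<notin> S a" by blast
  then show "orient U a b"
    using ab source_outside_adjacent[of a b s] unfolding orient_def by metis
qed

definition tiebreak_dag :: "('a \<Rightarrow> int) \<Rightarrow> ('a \<times> 'a) set" where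
  "tiebreak_dag g = {(a, b). (a, b) \<in> U \<and> (S a \<subset> S b \<or> S a = S b \<and> g a < g b)}"

lemma is_dag_tiebreak_dag: "is_dag V (tiebreak_dag g)"
proof -
  have "S a \<subset> S b \<or> S a = S b \<and> g a < g b" if "(a, b) \<in> (tiebreak_dag g)\<^sup>+" for a b
    using that by induction (auto simp: tiebreak_dag_def)
  then have "acyclic (tiebreak_dag g)"
    unfolding acyclic_def by blast
  moreover have "tiebreak_dag g \<subseteq> V \<times> V"
    unfolding tiebreak_dag_def using adjacent_iff by auto
  ultimately show ?thesis
    using finite_V unfolding is_dag_def by simp
qed

lemma skeleton_tiebreak_dag:
  assumes "inj_on g V"
  shows "skeleton (tiebreak_dag g) = {(a, b) \<in> U. S a \<subseteq> S b \<or> S b \<subseteq> S a}"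
proof
  show "skeleton (tiebreak_dag g) \<subseteq> {(a, b) \<in> U. S a \<subseteq> S b \<or> S b \<subseteq> S a}"
    unfolding skeleton_def tiebreak_dag_def using adjacent_sym by auto
next
  show "{(a, b) \<in> U. S a \<subseteq> S b \<or> S b \<subseteq> S a} \<subseteq> skeleton (tiebreak_dag g)"
  proof
    fix p assume "p \<in> {(a, b) \<in> U. S a \<subseteq> S b \<or> S b \<subseteq> S a}"
    then obtain a b where p: "p = (a, b)" and ab: "(a, b) \<in> U" "S a \<subseteq> S b \<or> S b \<subseteq> S a"
      by blast
    then have "g a \<noteq> g b"
      using assms adjacent_iff by (auto dest: inj_onD)
    then have "S a \<subset> S b \<or> S a = S b \<and> g a < g b \<or> S b \<subset> S a \<or> S b = S a \<and> g b < g a"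
      using ab(2) by auto
    then have "(a, b) \<in> tiebreak_dag g \<or> (b, a) \<in> tiebreak_dag g"
      using ab(1) adjacent_sym[OF ab(1)] unfolding tiebreak_dag_def by blast
    then show "p \<in> skeleton (tiebreak_dag g)"
      unfolding p skeleton_def by blast
  qed
qed

lemma v_structures_tiebreak_dag:
  assumes "inj_on g V"
  shows "v_structures (tiebreak_dag g) =
    {(a, c, b). (a, c) \<in> U \<and> (b, c) \<in> U \<and> S a \<subset> S c \<and> S b \<subset> S c \<and> a \<noteq> b \<and>
       \<not> ((a, b) \<in> U \<and> (S a \<subseteq> S b \<or> S b \<subseteq> S a))}"
proof -
  have strict: "S a \<subset> S c"
    if "(a, c) \<in> tiebreak_dag g" "(b, c) \<in> tiebreak_dag g" "a \<noteq> b"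
      "\<not> ((a, b) \<in> U \<and> (S a \<subseteq> S b \<or> S b \<subseteq> S a))" for a b c
  proof (rule ccontr)
    assume "\<not> S a \<subset> S c"
    then have "S a = S c" "S b \<subseteq> S c"
      using that(1,2) unfolding tiebreak_dag_def by auto
    moreover have "a \<in> V" "b \<in> V"
      using that(1,2) adjacent_iff unfolding tiebreak_dag_def by auto
    ultimately have "(a, b) \<in> U \<and> S b \<subseteq> S a"
      using S_nonempty[of b] that(3) adjacent_iff by auto
    then show False using that(4) by blast
  qed
  have "(a, c, b) \<in> v_structures (tiebreak_dag g) \<longleftrightarrow>
      (a, c) \<in> U \<and> (b, c) \<in> U \<and> S a \<subset> S c \<and> S b \<subset> S c \<and> a \<noteq> b \<and>
      \<not> ((a, b) \<in> U \<and> (S a \<subseteq> S b \<or> S b \<subseteq> S a))" for a c b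
  proof
    assume "(a, c, b) \<in> v_structures (tiebreak_dag g)"
    then have v: "(a, c) \<in> tiebreak_dag g" "(b, c) \<in> tiebreak_dag g" "a \<noteq> b"
        "\<not> ((a, b) \<in> U \<and> (S a \<subseteq> S b \<or> S b \<subseteq> S a))"
      unfolding v_structures_def skeleton_tiebreak_dag[OF assms] by auto
    moreover have "\<not> ((b, a) \<in> U \<and> (S b \<subseteq> S a \<or> S a \<subseteq> S b))"
      using v(4) adjacent_sym by blast
    ultimately show "(a, c) \<in> U \<and> (b, c) \<in> U \<and> S a \<subset> S c \<and> S b \<subset> S c \<and> a \<noteq> b \<and>
        \<not> ((a, b) \<in> U \<and> (S a \<subseteq> S b \<or> S b \<subseteq> S a))"
      using strict[OF v(1-4)] strict[OF v(2) v(1) v(3)[symmetric]]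
      unfolding tiebreak_dag_def by blast
  next
    assume "(a, c) \<in> U \<and> (b, c) \<in> U \<and> S a \<subset> S c \<and> S b \<subset> S c \<and> a \<noteq> b \<and>
        \<not> ((a, b) \<in> U \<and> (S a \<subseteq> S b \<or> S b \<subseteq> S a))"
    then show "(a, c, b) \<in> v_structures (tiebreak_dag g)"
      unfolding v_structures_def skeleton_tiebreak_dag[OF assms] by (auto simp: tiebreak_dag_def)
  qed
  then show ?thesis by auto
qed

lemma markov_equiv_tiebreak_dags:
  assumes "inj_on g V" "inj_on h V"
  shows "markov_equiv (tiebreak_dag g) (tiebreak_dag h)"
  unfolding markov_equiv_def
  using skeleton_tiebreak_dag v_structures_tiebreak_dag assms by simp

lemma cpdag_dir_tiebreak_dag:
  assumes "inj_on g V"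
  shows "cpdag_dir V (tiebreak_dag g) = {(a, b). (a, b) \<in> U \<and> S a \<subset> S b}"
proof
  show "cpdag_dir V (tiebreak_dag g) \<subseteq> {(a, b). (a, b) \<in> U \<and> S a \<subset> S b}"
  proof clarify
    fix a b assume ab: "(a, b) \<in> cpdag_dir V (tiebreak_dag g)"
    have "inj_on (uminus \<circ> g) V"
      using assms by (simp add: inj_on_def)
    then have "(a, b) \<in> tiebreak_dag (uminus \<circ> g)"
      using ab is_dag_tiebreak_dag markov_equiv_tiebreak_dags[OF assms]
      unfolding cpdag_dir_def by blast
    moreover have "(a, b) \<in> tiebreak_dag g"
      using ab unfolding cpdag_dir_def by blast
    ultimately show "(a, b) \<in> U \<and> S a \<subset> S b"
      unfolding tiebreak_dag_def by auto
  qed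
next
  show "{(a, b). (a, b) \<in> U \<and> S a \<subset> S b} \<subseteq> cpdag_dir V (tiebreak_dag g)"
  proof
    fix p assume "p \<in> {(a, b). (a, b) \<in> U \<and> S a \<subset> S b}"
    then obtain a b where p: "p = (a, b)" and ab: "(a, b) \<in> U" "S a \<subset> S b"
      by blast
    then obtain s where s: "s \<in> S b" "s \<notin> S a" by blast
    note s_props = source_outside_adjacent[OF ab(1) s]
    have "(a, b, s) \<in> v_structures (tiebreak_dag g)"
      unfolding v_structures_tiebreak_dag[OF assms]
      using ab s_props by auto
    then have "(a, b, s) \<in> v_structures D'" if "markov_equiv (tiebreak_dag g) D'" for D'
      using that unfolding markov_equiv_def by simp
    then have "(a, b) \<in> D'" if "markov_equiv (tiebreak_dag g) D'" for D'
      using that unfolding v_structures_def by blast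
    moreover have "(a, b) \<in> tiebreak_dag g"
      using ab unfolding tiebreak_dag_def by simp
    ultimately show "p \<in> cpdag_dir V (tiebreak_dag g)"
      unfolding p cpdag_dir_def by blast
  qed
qed

lemma init_CPDAG_eq_cpdag_tiebreak_dag:
  assumes "inj_on g V"
  shows "init_CPDAG U = cpdag V (tiebreak_dag g)"
  unfolding init_CPDAG_def cpdag_def cpdag_dir_tiebreak_dag[OF assms]
    skeleton_tiebreak_dag[OF assms] orient_iff
  using adjacent_sym by auto

end

lemma source_structure_udg:
  assumes "is_dag V D"
  shows "source_structure V (source_ancestors D) (udg V D)"
proof
  show "finite V"
    using assms unfolding is_dag_def by simp
  show "(a, b) \<in> udg V D \<longleftrightarrow>
      a \<in> V \<and> b \<in> V \<and> a \<noteq> b \<and> source_ancestors D a \<inter> source_ancestors D b \<noteq> {}" for a b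
    unfolding udg_def using trek_between_iff_common_source[OF assms] by simp
  show "source_ancestors D x \<noteq> {}" for x
    using source_ancestor_below[OF is_dag_imp_wf[OF assms] rtrancl_refl] by blast
  show "source_ancestors D x \<subseteq> V" if "x \<in> V" for x
    using assms that by (intro source_ancestors_subset) (simp_all add: is_dag_def)
  show "source_ancestors D s = {s}" if "s \<in> source_ancestors D x" for x s
    using that by (rule source_ancestors_of_source)
qed

theorem lemma5p3:
  fixes V :: "'a set" and U :: "('a \<times> 'a) set"
  assumes "UEC_representative V U"
  shows "\<exists>D. is_dag V D \<and> init_CPDAG U = cpdag V D"
proof -
  obtain D where D: "is_dag V D" and U: "U = udg V D"
    using assms unfolding UEC_representative_def by blast
  interpret source_structure V "source_ancestors D" U
    unfolding U using D by (rule source_structure_udg)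
  obtain f :: "'a \<Rightarrow> nat" where "inj_on f V"
    using finite_imp_inj_to_nat_seg[OF finite_V] by meson
  then have "inj_on (int \<circ> f) V"
    by (simp add: inj_on_def)
  then have "init_CPDAG U = cpdag V (tiebreak_dag (int \<circ> f))"
    by (rule init_CPDAG_eq_cpdag_tiebreak_dag)
  with is_dag_tiebreak_dag show ?thesis by blast
qed

end
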